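(* Let $\Delta=\{x\in\mathbb{R}^n:\ \ell_i(x)\ge0,\ i=1,\dots,d\}$ be a compact $n$-dimensional Delzant polytope with lattice distances $\ell_i(x)=c_i-\langle u_i,x\rangle$ to its facets, and for $x,y\in\Delta$ let $e^{N\varphi(x,y)}=\prod_{i=1}^d\ell_i(y)^{N\ell_i(x)}e^{-N\ell_i(y)}$ (with $0^0=1$), i.e. $\varphi(x,y)=\sum_i\ell_i(x)\log\ell_i(y)-\ell_i(y)$. Let $f,g\in C^\infty(\Delta)$ and $x\in\Delta$ with $f(x)\neq0$ and $x\notin\operatorname{supp}g$. Then there is a constant $c>0$ such that, for all sufficiently large $N$, $$\Big|\int_\Delta e^{N\varphi(x,y)}g(y)\,dy\Big|\le e^{-cN}\Big|\int_\Delta e^{N\varphi(x,y)}f(y)\,dy\Big|.$$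
   Context: A Delzant polytope is a compact convex polytope $\{x:\langle u_i,x\rangle\le c_i\}$ with $u_i\in(\mathbb{Z}^n)^*$ primitive outward facet normals, $c_i\in\mathbb{Z}$, each vertex lying on exactly $n$ facets whose normals form a $\mathbb{Z}$-basis. $dy$ is Lebesgue measure. *)

theory Defs
  imports "HOL-Analysis.Analysis"
begin

definition rvec :: "int^'n \<Rightarrow> real^'n" where
  "rvec w = (\<chi> j. real_of_int (w $ j))"

definition ldist :: "(nat \<Rightarrow> int^'n) \<Rightarrow> (nat \<Rightarrow> int) \<Rightarrow> nat \<Rightarrow> real^'n \<Rightarrow> real" where
  "ldist u c i x = real_of_int (c i) - rvec (u i) \<bullet> x"

definition polytope_of :: "nat \<Rightarrow> (nat \<Rightarrow> int^'n) \<Rightarrow> (nat \<Rightarrow> int) \<Rightarrow> (real^'n) set" where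
  "polytope_of d u c = {x. \<forall>i<d. ldist u c i x \<ge> 0}"

definition primitive :: "int^'n \<Rightarrow> bool" where
  "primitive w \<longleftrightarrow> (\<forall>k::int. \<forall>v::int^'n. w = k *s v \<longrightarrow> k = 1 \<or> k = -1)"

definition int_basis :: "nat set \<Rightarrow> (nat \<Rightarrow> int^'n) \<Rightarrow> bool" where
  "int_basis I u \<longleftrightarrow>
     (\<forall>w::int^'n. \<exists>!a::nat \<Rightarrow> int. (\<forall>j. j \<notin> I \<longrightarrow> a j = 0) \<and> w = (\<Sum>i\<in>I. a i *s u i))"

definition delzant :: "nat \<Rightarrow> (nat \<Rightarrow> int^'n) \<Rightarrow> (nat \<Rightarrow> int) \<Rightarrow> bool" where
  "delzant d u c \<longleftrightarrow>
     (let P = polytope_of d u c in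
       compact P \<and> interior P \<noteq> {} \<and>
       inj_on u {..<d} \<and>
       (\<forall>i<d. primitive (u i)) \<and>
       (\<forall>i<d. {x \<in> P. ldist u c i x = 0} facet_of P) \<and>
       (\<forall>v. v extreme_point_of P \<longrightarrow>
           card {i. i < d \<and> ldist u c i v = 0} = CARD('n) \<and>
           int_basis {i. i < d \<and> ldist u c i v = 0} u))"

text \<open>Power with the convention 0^0 = 1 (Isabelle's powr has 0 powr a = 0).\<close>
definition pow0 :: "real \<Rightarrow> real \<Rightarrow> real" where
  "pow0 t a = (if t = 0 then (if a = 0 then 1 else 0) else t powr a)"

definition expNphi :: "nat \<Rightarrow> (nat \<Rightarrow> int^'n) \<Rightarrow> (nat \<Rightarrow> int) \<Rightarrow> real \<Rightarrow> real^'n \<Rightarrow> real^'n \<Rightarrow> real" where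
  "expNphi d u c N x y =
     (\<Prod>i<d. pow0 (ldist u c i y) (N * ldist u c i x) * exp (- N * ldist u c i y))"

fun dpart :: "'a::real_normed_vector list \<Rightarrow> ('a \<Rightarrow> 'b::real_normed_vector) \<Rightarrow> 'a \<Rightarrow> 'b" where
  "dpart [] F = F"
| "dpart (v # vs) F = (\<lambda>x. vector_derivative (\<lambda>t::real. dpart vs F (x + t *\<^sub>R v)) (at 0))"

definition smooth_on :: "'a::euclidean_space set \<Rightarrow> ('a \<Rightarrow> 'b::real_normed_vector) \<Rightarrow> bool" where
  "smooth_on U F \<longleftrightarrow> open U \<and>
     (\<forall>vs. set vs \<subseteq> Basis \<longrightarrow>
        continuous_on U (dpart vs F) \<and>
        (\<forall>v\<in>Basis. \<forall>x\<in>U. (\<lambda>t::real. dpart vs F (x + t *\<^sub>R v)) differentiable (at 0)))"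

definition smooth_on_closed :: "'a::euclidean_space set \<Rightarrow> ('a \<Rightarrow> 'b::real_normed_vector) \<Rightarrow> bool" where
  "smooth_on_closed K f \<longleftrightarrow> (\<exists>U F. K \<subseteq> U \<and> smooth_on U F \<and> (\<forall>y\<in>K. F y = f y))"

end

theory Submission
  imports Defs
begin

text \<open>For fixed \<open>x\<close>, \<open>e^{N\<phi>(x,y)} = h(y)^N\<close> with \<open>h(y) = \<Prod>\<^sub>i \<ell>\<^sub>i(y)^{\<ell>\<^sub>i(x)} e^{-\<ell>\<^sub>i(y)}\<close>. Since
  \<open>t \<mapsto> t^a e^{-t}\<close> is uniquely maximised at \<open>t = a\<close> and a point of a bounded polytope is
  determined by its facet distances, \<open>h\<close> has a strict maximum on \<open>\<Delta>\<close> at \<open>x\<close>. Hence off any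
  neighbourhood of \<open>x\<close> (in particular on \<open>supp g\<close>) \<open>h \<le> m < h(x)\<close>, so the \<open>g\<close>-integral is
  \<open>O(m^N)\<close>; whereas near \<open>x\<close> we have \<open>f \<approx> f(x) \<noteq> 0\<close> and \<open>h \<ge> M > m\<close> on a box of positive
  volume, which bounds the \<open>f\<close>-integral below by a multiple of \<open>M^N\<close>.\<close>

lemma integrable_continuous_compact:
  fixes f :: "'a::euclidean_space \<Rightarrow> 'b::euclidean_space"
  assumes "compact S" "continuous_on S f"
  shows "f integrable_on S"
proof -
  have "integrable lebesgue (\<lambda>x. indicator S x *\<^sub>R f x)"
    using borel_integrable_compact[OF assms] by (simp add: integrable_completion)
  then have "(\<lambda>x. indicator S x *\<^sub>R f x) integrable_on UNIV"
    by (rule integrable_on_lebesgue)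
  then show ?thesis
    by (simp add: indicator_scaleR_eq_if integrable_restrict_UNIV)
qed

lemma integral_const_eq_mult:
  fixes S :: "'a::euclidean_space set"
  shows "integral S (\<lambda>_. k) = k * integral S (\<lambda>_. 1::real)"
  using integral_cmul[where c=k and f="\<lambda>_. 1::real"] by simp

lemma compact_strict_upper_bound:
  fixes h :: "'a::topological_space \<Rightarrow> real"
  assumes "compact K" "continuous_on K h" "\<forall>y\<in>K. h y < p"
  shows "\<exists>m<p. \<forall>y\<in>K. h y \<le> m"
proof (cases "K = {}")
  case True
  then show ?thesis using lt_ex by auto
next
  case False
  then obtain y where "y \<in> K" "\<forall>z\<in>K. h z \<le> h y"
    using continuous_attains_sup[OF assms(1) _ assms(2)] by blast
  then show ?thesis using assms(3) by blast
qed

lemma norm_integral_power_le: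
  fixes h :: "'a::euclidean_space \<Rightarrow> real" and g :: "'a \<Rightarrow> 'b::euclidean_space"
  assumes S: "compact S" and hc: "continuous_on S h" and gc: "continuous_on S g"
    and h0: "\<forall>y\<in>S. 0 \<le> h y" and m: "0 \<le> m" and hm: "\<forall>y\<in>S. g y \<noteq> 0 \<longrightarrow> h y \<le> m"
  shows "\<exists>\<gamma>. \<forall>N. norm (integral S (\<lambda>y. h y ^ N *\<^sub>R g y)) \<le> \<gamma> * m ^ N"
proof -
  obtain B where B: "0 \<le> B" "\<forall>y\<in>S. norm (g y) \<le> B"
  proof -
    obtain B where "B > 0" "\<forall>z\<in>g ` S. norm z \<le> B"
      using compact_imp_bounded[OF compact_continuous_image[OF gc S]] by (auto simp: bounded_pos)
    then show thesis using that[of B] by auto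
  qed
  have "norm (integral S (\<lambda>y. h y ^ N *\<^sub>R g y)) \<le> (B * integral S (\<lambda>_. 1)) * m ^ N" for N
  proof -
    have "norm (h y ^ N *\<^sub>R g y) \<le> B * m ^ N" if "y \<in> S" for y
    proof (cases "g y = 0")
      case True
      then show ?thesis using B m by simp
    next
      case False
      then have "h y ^ N \<le> m ^ N" using hm h0 that by (intro power_mono) auto
      then show ?thesis
        using B h0 that by (simp add: mult.commute mult_mono')
    qed
    then have "norm (integral S (\<lambda>y. h y ^ N *\<^sub>R g y)) \<le> integral S (\<lambda>_. B * m ^ N)"
      using S hc gc
      by (intro integral_norm_bound_integral integrable_continuous_compact continuous_intros) auto
    also have "\<dots> = (B * integral S (\<lambda>_. 1)) * m ^ N"
      by (subst integral_const_eq_mult) (simp add: mult_ac)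
    finally show ?thesis .
  qed
  then show ?thesis by blast
qed

lemma integral_power_ge_near_peak:
  fixes h :: "'a::euclidean_space \<Rightarrow> real"
  assumes S: "compact S" and hc: "continuous_on S h" and h0: "\<forall>y\<in>S. 0 \<le> h y"
    and x: "x \<in> closure (interior S)" "x \<in> S" and M: "0 \<le> M" "M < h x"
  shows "\<exists>\<mu>>0. \<forall>N. \<mu> * M ^ N \<le> integral S (\<lambda>y. h y ^ N)"
proof -
  obtain r where r: "r > 0" "\<forall>y\<in>S. dist y x < r \<longrightarrow> M < h y"
  proof -
    obtain r where "r > 0" "\<forall>y\<in>S. dist y x < r \<longrightarrow> dist (h y) (h x) < h x - M"
      using hc x(2) M(2) unfolding continuous_on_iff by (meson diff_gt_0_iff_gt)
    then show ?thesis using that by (fastforce simp: dist_real_def)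
  qed
  obtain w where w: "w \<in> interior S" "dist w x < r"
    using x(1) r(1) closure_approachable by blast
  obtain a b where ab: "cbox a b \<subseteq> interior S \<inter> ball x r" "\<forall>i\<in>Basis. a \<bullet> i < b \<bullet> i"
  proof -
    have "open (interior S \<inter> ball x r)" "w \<in> interior S \<inter> ball x r"
      using w by (auto simp: dist_commute)
    then show ?thesis using open_contains_cbox that by metis
  qed
  have box: "cbox a b \<subseteq> S" using ab(1) interior_subset by blast
  have hM: "M \<le> h y" if "y \<in> cbox a b" for y
    using r(2) ab(1) box that by (force simp: dist_commute)
  show ?thesis
  proof (intro exI conjI allI)
    show "measure lborel (cbox a b) > 0" using ab(2) by (rule content_pos_lt)
    fix N
    have hN: "continuous_on S (\<lambda>y. h y ^ N)" using hc by (intro continuous_intros)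
    have "measure lborel (cbox a b) * M ^ N = integral (cbox a b) (\<lambda>_. M ^ N)" by simp
    also have "\<dots> \<le> integral (cbox a b) (\<lambda>y. h y ^ N)"
      using hM M(1) continuous_on_subset[OF hN box]
      by (intro integral_le integrable_continuous power_mono) auto
    also have "\<dots> \<le> integral S (\<lambda>y. h y ^ N)"
      using box h0 S hN
      by (intro integral_subset_le integrable_continuous continuous_on_subset[OF hN box]
          integrable_continuous_compact) auto
    finally show "measure lborel (cbox a b) * M ^ N \<le> integral S (\<lambda>y. h y ^ N)" .
  qed
qed

lemma norm_integral_power_ge:
  fixes h :: "'a::euclidean_space \<Rightarrow> real" and f :: "'a \<Rightarrow> 'b::euclidean_space"
  assumes S: "compact S" and hc: "continuous_on S h" and fc: "continuous_on S f"
    and h0: "\<forall>y\<in>S. 0 \<le> h y" and m: "0 \<le> m"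
    and near: "\<forall>y\<in>S. dist y x < \<rho> \<longrightarrow> norm (f y - f x) \<le> norm (f x) / 2"
    and far: "\<forall>y\<in>S. \<rho> \<le> dist y x \<longrightarrow> h y \<le> m"
  shows "\<exists>\<beta>. \<forall>N. norm (f x) / 2 * integral S (\<lambda>y. h y ^ N) - \<beta> * m ^ N
                 \<le> norm (integral S (\<lambda>y. h y ^ N *\<^sub>R f y))"
proof -
  obtain B where B: "0 \<le> B" "\<forall>y\<in>S. norm (f y - f x) \<le> B"
  proof -
    have "compact ((\<lambda>y. f y - f x) ` S)" using S fc by (intro compact_continuous_image continuous_intros)
    then obtain B where "B > 0" "\<forall>z\<in>(\<lambda>y. f y - f x) ` S. norm z \<le> B"
      using compact_imp_bounded bounded_pos by blast
    then show thesis using that[of B] by auto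
  qed
  define V where "V = integral S (\<lambda>_. 1::real)"
  have "norm (f x) / 2 * integral S (\<lambda>y. h y ^ N) - (B * V) * m ^ N
          \<le> norm (integral S (\<lambda>y. h y ^ N *\<^sub>R f y))" for N
  proof -
    define I where "I = integral S (\<lambda>y. h y ^ N)"
    define J where "J = integral S (\<lambda>y. h y ^ N *\<^sub>R (f y - f x))"
    have hN: "continuous_on S (\<lambda>y. h y ^ N)" using hc by (intro continuous_intros)
    have I0: "0 \<le> I"
      unfolding I_def using h0 by (intro integral_nonneg integrable_continuous_compact[OF S hN]) auto
    have "integral S (\<lambda>y. h y ^ N *\<^sub>R f y) = integral S (\<lambda>y. h y ^ N *\<^sub>R f x + h y ^ N *\<^sub>R (f y - f x))"
      by (simp add: scaleR_right_diff_distrib)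
    also have "\<dots> = integral S (\<lambda>y. h y ^ N *\<^sub>R f x) + J"
      unfolding J_def using S hc fc
      by (subst integral_add) (auto intro!: integrable_continuous_compact continuous_intros)
    also have "integral S (\<lambda>y. h y ^ N *\<^sub>R f x) = I *\<^sub>R f x"
      unfolding I_def
      by (intro integral_unique has_integral_scaleR_left integrable_integral
          integrable_continuous_compact[OF S hN])
    finally have split: "integral S (\<lambda>y. h y ^ N *\<^sub>R f y) = I *\<^sub>R f x + J" .
    have pw: "norm (h y ^ N *\<^sub>R (f y - f x)) \<le> norm (f x) / 2 * h y ^ N + B * m ^ N"
      if y: "y \<in> S" for y
    proof -
      have n: "norm (h y ^ N *\<^sub>R (f y - f x)) = h y ^ N * norm (f y - f x)"
        using h0 y by simp
      have "0 \<le> norm (f x) / 2 * h y ^ N" "0 \<le> B * m ^ N" using h0 y B m by auto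
      moreover have "h y ^ N * norm (f y - f x) \<le> norm (f x) / 2 * h y ^ N \<or>
                     h y ^ N * norm (f y - f x) \<le> B * m ^ N"
      proof (cases "dist y x < \<rho>")
        case True
        then have "h y ^ N * norm (f y - f x) \<le> h y ^ N * (norm (f x) / 2)"
          using near y h0 by (intro mult_left_mono) auto
        then show ?thesis by (simp add: mult.commute)
      next
        case False
        then have "h y ^ N * norm (f y - f x) \<le> m ^ N * B"
          using far B h0 y m by (intro mult_mono power_mono) auto
        then show ?thesis by (simp add: mult.commute)
      qed
      ultimately show ?thesis unfolding n by linarith
    qed
    have "norm J \<le> integral S (\<lambda>y. norm (f x) / 2 * h y ^ N + B * m ^ N)"
      unfolding J_def using pw S hc fc
      by (intro integral_norm_bound_integral integrable_continuous_compact continuous_intros) auto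
    also have "\<dots> = norm (f x) / 2 * I + (B * V) * m ^ N"
    proof -
      have "integral S (\<lambda>y. norm (f x) / 2 * h y ^ N + B * m ^ N)
          = integral S (\<lambda>y. norm (f x) / 2 * h y ^ N) + integral S (\<lambda>_. B * m ^ N)"
        using S hc by (intro integral_add integrable_continuous_compact continuous_intros) auto
      then show ?thesis
        unfolding I_def V_def integral_const_eq_mult[of S "B * m ^ N"] by (simp add: mult_ac)
    qed
    finally have "norm J \<le> norm (f x) / 2 * I + (B * V) * m ^ N" .
    moreover have "norm (I *\<^sub>R f x) - norm J \<le> norm (I *\<^sub>R f x + J)"
      by (metis norm_diff_ineq)
    moreover have "norm (I *\<^sub>R f x) = norm (f x) * I" using I0 by simp
    ultimately show ?thesis unfolding split I_def[symmetric] by linarith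
  qed
  then show ?thesis by blast
qed

lemma eventually_exp_domination:
  fixes L R :: "nat \<Rightarrow> real"
  assumes m: "0 \<le> m" "m < M" and \<alpha>: "0 < \<alpha>"
    and L: "\<And>N. L N \<le> \<gamma> * m ^ N" and R: "\<And>N. \<alpha> * M ^ N - \<beta> * m ^ N \<le> R N"
  shows "\<exists>C>0. \<forall>\<^sub>F N in sequentially. L N \<le> exp (- C * real N) * R N"
proof -
  define q where "q = m / M"
  define s where "s = (q + 1) / 2"
  have "0 \<le> q" "q < 1" using m by (auto simp: q_def)
  then have q: "0 \<le> q" "q < s" "s < 1" by (auto simp: s_def)
  have s: "0 < s" using q by simp
  have m_eq: "m ^ N = q ^ N * M ^ N" for N using m by (simp add: q_def power_divide)
  have q_eq: "q ^ N = (q / s) ^ N * s ^ N" for N using s by (simp add: power_divide)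
  have "(\<lambda>N. \<beta> * q ^ N) \<longlonglongrightarrow> 0" "(\<lambda>N. \<gamma> * (q / s) ^ N) \<longlonglongrightarrow> 0"
    using q s by (auto intro!: tendsto_mult_right_zero LIMSEQ_power_zero)
  then have ev: "\<forall>\<^sub>F N in sequentially. \<beta> * q ^ N < \<alpha> / 2 \<and> \<gamma> * (q / s) ^ N < \<alpha> / 2"
    using \<alpha> by (intro eventually_conj order_tendstoD(2)) auto
  have "L N \<le> exp (- (- ln s) * real N) * R N"
    if N: "\<beta> * q ^ N < \<alpha> / 2" "\<gamma> * (q / s) ^ N < \<alpha> / 2" for N
  proof -
    have pos: "0 < M ^ N" "0 < s ^ N" using m s by auto
    have "L N \<le> (\<gamma> * (q / s) ^ N) * (s ^ N * M ^ N)"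
      using L[of N] unfolding m_eq q_eq by (simp add: mult_ac)
    also have "\<dots> \<le> s ^ N * (\<alpha> / 2 * M ^ N)"
      using N pos by (simp add: mult_right_mono mult_ac)
    also have "\<dots> \<le> s ^ N * (\<alpha> * M ^ N - \<beta> * m ^ N)"
      using N pos unfolding m_eq by (intro mult_left_mono) (auto simp: mult.assoc[symmetric] mult_right_mono)
    also have "\<dots> \<le> s ^ N * R N" using R pos by (intro mult_left_mono) auto
    finally show ?thesis using s by (simp add: exp_of_nat_mult mult.commute)
  qed
  then show ?thesis using q s ev by (intro exI[of _ "- ln s"]) (auto elim: eventually_mono)
qed

lemma laplace_localisation:
  fixes h :: "'a::euclidean_space \<Rightarrow> real" and f g :: "'a \<Rightarrow> 'b::euclidean_space"
  assumes S: "compact S" and x: "x \<in> closure (interior S)"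
    and hc: "continuous_on S h" and fc: "continuous_on S f" and gc: "continuous_on S g"
    and h0: "\<forall>y\<in>S. 0 \<le> h y" and peak: "\<forall>y\<in>S. y \<noteq> x \<longrightarrow> h y < h x"
    and fx: "f x \<noteq> 0" and gx: "x \<notin> closure {y \<in> S. g y \<noteq> 0}"
  shows "\<exists>C>0. \<forall>\<^sub>F N in sequentially.
           norm (integral S (\<lambda>y. h y ^ N *\<^sub>R g y))
             \<le> exp (- C * real N) * norm (integral S (\<lambda>y. h y ^ N *\<^sub>R f y))"
proof -
  have clS: "closed S" using S by (rule compact_imp_closed)
  have xS: "x \<in> S"
    using x closure_mono[OF interior_subset, of S] closure_closed[OF clS] by blast
  obtain \<rho> where \<rho>: "\<rho> > 0" "\<forall>y\<in>S. dist y x < \<rho> \<longrightarrow> norm (f y - f x) \<le> norm (f x) / 2"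
    using fc xS fx unfolding continuous_on_iff dist_norm
    by (metis half_gt_zero less_imp_le zero_less_norm_iff)
  define K where "K = closure {y \<in> S. g y \<noteq> 0} \<union> (S - ball x \<rho>)"
  have "closure {y \<in> S. g y \<noteq> 0} \<subseteq> S" using clS by (intro closure_minimal) auto
  then have KS: "K \<subseteq> S" by (auto simp: K_def)
  have "compact K"
    unfolding compact_eq_bounded_closed
    using bounded_subset[OF compact_imp_bounded[OF S] KS] clS by (auto simp: K_def)
  have xK: "x \<notin> K" using gx \<rho>(1) by (simp add: K_def)
  obtain m0 where m0: "m0 < h x" "\<forall>y\<in>K. h y \<le> m0"
  proof -
    have "\<forall>y\<in>K. h y < h x"
    proof
      fix y assume "y \<in> K"
      then have "y \<in> S" "y \<noteq> x" using KS xK by auto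
      then show "h y < h x" using peak by blast
    qed
    from compact_strict_upper_bound[OF \<open>compact K\<close> continuous_on_subset[OF hc KS] this]
    obtain m' where "m' < h x" "\<forall>y\<in>K. h y \<le> m'" by blast
    then show thesis by (rule that)
  qed
  have hx: "0 < h x"
  proof -
    have "interior S \<noteq> {}" using x by auto
    moreover have "interior S \<noteq> {x}" using not_open_singleton[of x] by (metis open_interior)
    ultimately obtain y where "y \<in> interior S" "y \<noteq> x" by blast
    then have "y \<in> S" "y \<noteq> x" using interior_subset by auto
    then have "0 \<le> h y" "h y < h x" using peak h0 by auto
    then show ?thesis by linarith
  qed
  define m where "m = max m0 0"
  define M where "M = (m + h x) / 2"
  have mM: "0 \<le> m" "m < M" "M < h x" using m0 hx by (auto simp: m_def M_def)
  have hK: "h y \<le> m" if "y \<in> K" for y using m0 that by (auto simp: m_def)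
  have far: "\<forall>y\<in>S. \<rho> \<le> dist y x \<longrightarrow> h y \<le> m"
    using hK by (auto simp: K_def dist_commute)
  have supp: "\<forall>y\<in>S. g y \<noteq> 0 \<longrightarrow> h y \<le> m"
    using hK closure_subset[of "{y \<in> S. g y \<noteq> 0}"] by (auto simp: K_def)
  obtain \<mu> where \<mu>: "\<mu> > 0" "\<forall>N. \<mu> * M ^ N \<le> integral S (\<lambda>y. h y ^ N)"
    using integral_power_ge_near_peak[OF S hc h0 x xS, of M] mM by auto
  obtain \<beta> where \<beta>: "\<forall>N. norm (f x) / 2 * integral S (\<lambda>y. h y ^ N) - \<beta> * m ^ N
                            \<le> norm (integral S (\<lambda>y. h y ^ N *\<^sub>R f y))"
    using norm_integral_power_ge[OF S hc fc h0 mM(1) \<rho>(2) far] by blast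
  obtain \<gamma> where \<gamma>: "\<forall>N. norm (integral S (\<lambda>y. h y ^ N *\<^sub>R g y)) \<le> \<gamma> * m ^ N"
    using norm_integral_power_le[OF S hc gc h0 mM(1) supp] by blast
  have lower: "norm (f x) / 2 * \<mu> * M ^ N - \<beta> * m ^ N \<le> norm (integral S (\<lambda>y. h y ^ N *\<^sub>R f y))"
    for N
  proof -
    have "norm (f x) / 2 * \<mu> * M ^ N \<le> norm (f x) / 2 * integral S (\<lambda>y. h y ^ N)"
      using \<mu>(2) by (simp add: mult.assoc mult_left_mono)
    then show ?thesis using \<beta>[rule_format, of N] by linarith
  qed
  have "0 < norm (f x) / 2 * \<mu>" using fx \<mu>(1) by simp
  from eventually_exp_domination[OF mM(1,2) this \<gamma>[rule_format] lower]
  show ?thesis .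
qed

lemma pow0_nonneg: "0 \<le> pow0 t a"
  by (simp add: pow0_def)

lemma pow0_self_pos: "0 \<le> a \<Longrightarrow> 0 < pow0 a a"
  by (simp add: pow0_def)

lemma pow0_mult_of_nat:
  assumes "0 \<le> t"
  shows "pow0 t (real N * a) = pow0 t a ^ N"
  using assms by (cases "t = 0"; cases "N = 0")
    (auto simp: pow0_def powr_powr[symmetric] powr_realpow mult.commute)

lemma continuous_on_pow0:
  assumes "0 \<le> a" "continuous_on S f" "\<forall>y\<in>S. 0 \<le> f y"
  shows "continuous_on S (\<lambda>y. pow0 (f y) a)"
proof (cases "a = 0")
  case True
  have "pow0 t 0 = 1" for t by (simp add: pow0_def)
  then show ?thesis using True by simp
next
  case False
  then have "continuous_on S (\<lambda>y. f y powr a)" using assms by (intro continuous_on_powr') auto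
  moreover have "pow0 (f y) a = f y powr a" for y using False by (simp add: pow0_def)
  ultimately show ?thesis by simp
qed

lemma pow0_exp_less_at_self:
  fixes a t :: real
  assumes "0 \<le> a" "0 \<le> t" "t \<noteq> a"
  shows "pow0 t a * exp (- t) < pow0 a a * exp (- a)"
proof (cases "a = 0 \<or> t = 0")
  case True
  then show ?thesis using assms by (auto simp: pow0_def)
next
  case False
  then have a: "0 < a" and t: "0 < t" using assms by auto
  have "a * (ln t - ln a) < t - a"
    using ln_diff_less[OF t a assms(3)] a by (simp add: field_simps)
  then have "exp (a * ln t - t) < exp (a * ln a - a)" by (simp add: algebra_simps)
  then show ?thesis using a t
    by (simp add: pow0_def powr_def exp_diff exp_minus field_simps mult.commute)
qed

lemma convex_polytope_of: "convex (polytope_of d u c)"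
proof -
  have "polytope_of d u c = (\<Inter>i\<in>{..<d}. {x. rvec (u i) \<bullet> x \<le> real_of_int (c i)})"
    by (auto simp: polytope_of_def ldist_def)
  then show ?thesis by (simp add: convex_INT convex_halfspace_le)
qed

lemma ldist_add_scaleR: "ldist u c i (y + t *\<^sub>R v) = ldist u c i y - t * (rvec (u i) \<bullet> v)"
  by (simp add: ldist_def inner_add_right algebra_simps)

lemma eq_if_ldist_eq:
  assumes P: "bounded (polytope_of d u c)" and xy: "x \<in> polytope_of d u c" "y \<in> polytope_of d u c"
    and eq: "\<forall>i<d. ldist u c i y = ldist u c i x"
  shows "y = x"
proof (rule ccontr)
  assume "y \<noteq> x"
  \<comment> \<open>then the whole line through \<open>x\<close> and \<open>y\<close> lies in the polytope\<close>
  define v where "v = y - x"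
  have v: "0 < norm v" using \<open>y \<noteq> x\<close> by (simp add: v_def)
  have "rvec (u i) \<bullet> v = 0" if "i < d" for i
    using eq that by (simp add: v_def ldist_def inner_diff_right)
  then have line: "x + t *\<^sub>R v \<in> polytope_of d u c" for t
    using xy(1) by (simp add: polytope_of_def ldist_add_scaleR)
  obtain B where B: "\<forall>z\<in>polytope_of d u c. norm z \<le> B"
    using P by (auto simp: bounded_iff)
  define t where "t = (B + norm x + 1) / norm v"
  have "0 \<le> B" using B xy(1) norm_ge_zero order_trans by blast
  then have "norm (t *\<^sub>R v) = B + norm x + 1" using v by (simp add: t_def)
  moreover have "norm (t *\<^sub>R v) \<le> norm (x + t *\<^sub>R v) + norm x"
    by (metis add_diff_cancel_left' norm_triangle_ineq4 add.commute)
  ultimately show False using B line[of t] by force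
qed

lemma expNphi_nonneg: "0 \<le> expNphi d u c N x y"
  by (simp add: expNphi_def pow0_nonneg prod_nonneg)

lemma expNphi_of_nat:
  assumes "y \<in> polytope_of d u c"
  shows "expNphi d u c (real N) x y = expNphi d u c 1 x y ^ N"
  unfolding expNphi_def prod_power_distrib
proof (rule prod.cong[OF refl])
  fix i assume "i \<in> {..<d}"
  then have "0 \<le> ldist u c i y" using assms by (simp add: polytope_of_def)
  then show "pow0 (ldist u c i y) (real N * ldist u c i x) * exp (- real N * ldist u c i y)
      = (pow0 (ldist u c i y) (1 * ldist u c i x) * exp (- 1 * ldist u c i y)) ^ N"
    by (simp add: pow0_mult_of_nat power_mult_distrib exp_of_nat_mult[symmetric])
qed

lemma continuous_on_expNphi:
  assumes "x \<in> polytope_of d u c"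
  shows "continuous_on (polytope_of d u c) (expNphi d u c 1 x)"
  unfolding expNphi_def ldist_def using assms
  by (intro continuous_intros continuous_on_pow0) (auto simp: polytope_of_def ldist_def)

lemma expNphi_less_at_diagonal:
  assumes P: "bounded (polytope_of d u c)"
    and xy: "x \<in> polytope_of d u c" "y \<in> polytope_of d u c" "y \<noteq> x"
  shows "expNphi d u c 1 x y < expNphi d u c 1 x x"
proof -
  obtain j where j: "j < d" "ldist u c j y \<noteq> ldist u c j x"
    using eq_if_ldist_eq[OF P xy(1,2)] xy(3) by blast
  define F where "F z i = pow0 (ldist u c i z) (ldist u c i x) * exp (- ldist u c i z)" for z i
  have nonneg: "0 \<le> ldist u c i y" "0 \<le> ldist u c i x" if "i < d" for i
    using xy that by (auto simp: polytope_of_def)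
  have "F y i \<le> F x i" if "i < d" for i
    using pow0_exp_less_at_self[OF nonneg(2,1)[OF that]] by (cases "ldist u c i y = ldist u c i x") (auto simp: F_def)
  moreover have "F y j < F x j"
    using pow0_exp_less_at_self[OF nonneg(2,1)[OF j(1)] j(2)] by (simp add: F_def)
  moreover have "0 < F x i" if "i < d" for i
    using pow0_self_pos[OF nonneg(2)[OF that]] by (simp add: F_def)
  ultimately have "prod (F y) {..<d} < prod (F x) {..<d}"
    using j(1) by (intro prod_mono_strict[of j]) (auto simp: F_def pow0_nonneg)
  then show ?thesis by (simp add: expNphi_def F_def)
qed

lemma smooth_on_closed_imp_continuous_on:
  assumes "smooth_on_closed K f"
  shows "continuous_on K f"
proof -
  obtain U F where U: "K \<subseteq> U" "smooth_on U F" "\<forall>y\<in>K. F y = f y"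
    using assms by (auto simp: smooth_on_closed_def)
  have "continuous_on U (dpart [] F)"
    using U(2) unfolding smooth_on_def by (metis empty_set empty_subsetI)
  then show ?thesis
    using U(1,3) continuous_on_subset continuous_on_cong by fastforce
qed

theorem theorem4p2:
  fixes d :: nat and u :: "nat \<Rightarrow> int^'n" and c :: "nat \<Rightarrow> int"
    and f g :: "real^'n \<Rightarrow> complex" and x :: "real^'n"
  assumes "delzant d u c"
    and "smooth_on_closed (polytope_of d u c) f"
    and "smooth_on_closed (polytope_of d u c) g"
    and "x \<in> polytope_of d u c"
    and "f x \<noteq> 0"
    and "x \<notin> closure {y \<in> polytope_of d u c. g y \<noteq> 0}"
  shows "\<exists>C>0. \<forall>\<^sub>F N in sequentially.
     norm (integral (polytope_of d u c) (\<lambda>y. expNphi d u c (real N) x y *\<^sub>R g y))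
       \<le> exp (- C * real N) *
         norm (integral (polytope_of d u c) (\<lambda>y. expNphi d u c (real N) x y *\<^sub>R f y))"
proof -
  let ?P = "polytope_of d u c" and ?h = "expNphi d u c 1 x"
  have P: "compact ?P" "interior ?P \<noteq> {}"
    using assms(1) by (auto simp: delzant_def Let_def)
  have "x \<in> closure (interior ?P)"
    using convex_closure_interior[OF convex_polytope_of P(2)] closure_subset assms(4) by blast
  moreover have "\<forall>y\<in>?P. 0 \<le> ?h y" by (simp add: expNphi_nonneg)
  moreover have "\<forall>y\<in>?P. y \<noteq> x \<longrightarrow> ?h y < ?h x"
    using expNphi_less_at_diagonal[OF compact_imp_bounded[OF P(1)] assms(4)] by blast
  ultimately have "\<exists>C>0. \<forall>\<^sub>F N in sequentially.
      norm (integral ?P (\<lambda>y. ?h y ^ N *\<^sub>R g y)) \<le> exp (- C * real N) * norm (integral ?P (\<lambda>y. ?h y ^ N *\<^sub>R f y))"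
    using laplace_localisation[OF P(1) _ continuous_on_expNphi[OF assms(4)]
        smooth_on_closed_imp_continuous_on[OF assms(2)] smooth_on_closed_imp_continuous_on[OF assms(3)]
        _ _ assms(5,6)]
    by blast
  moreover have "integral ?P (\<lambda>y. expNphi d u c (real N) x y *\<^sub>R \<phi> y)
                 = integral ?P (\<lambda>y. ?h y ^ N *\<^sub>R \<phi> y)" for N and \<phi> :: "real^'n \<Rightarrow> complex"
    by (intro integral_cong) (simp add: expNphi_of_nat)
  ultimately show ?thesis by (simp only:)
qed

end
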